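(* Let $\mathcal{D}=(V,E)$ be a DAG with $n=|V|$ nodes, and let $\mathcal{U}$ be its unconditional dependence graph. Then $\mathcal{U}$ is equal to each of the following undirected graphs on $V$: (1) $\mathcal{U}_1=(V,\{\{v,w\}: v\neq w,\ \mathrm{an}_\mathcal{D}(v)\cap\mathrm{an}_\mathcal{D}(w)\neq\emptyset\})$, i.e. two distinct nodes are adjacent iff they have a common ancestor in $\mathcal{D}$; (2) $\mathcal{U}_2=\big(V,\bigcup_{m\in\mathrm{ma}_\mathcal{D}(V)}\{\{v,w\}: v,w\in\mathrm{de}_\mathcal{D}(m),\ v\neq w\}\big)$; (3) $\mathcal{U}_3=m(t(r(\mathcal{D})))$; (4) the graph $\mathcal{U}_4$ whose adjacency matrix is $a(T^\top T)$, where $T=\sum_{p=0}^{n-1}A_\mathcal{D}^p$.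
   Context: A DAG $\mathcal{D}=(V,E)$ has adjacency matrix $A_\mathcal{D}=[a_{v,w}]$ with $a_{v,w}=1$ iff $v\to w\in E$, else $0$ (identify $V$ with $[n]$). $\mathrm{an}_\mathcal{D}(v)$ and $\mathrm{de}_\mathcal{D}(v)$ denote the ancestors/descendants of $v$ (nodes with a directed path to/from $v$), with $v\in\mathrm{an}_\mathcal{D}(v)$ and $v\in\mathrm{de}_\mathcal{D}(v)$. $\mathrm{ma}_\mathcal{D}(V)$ is the set of source nodes of $\mathcal{D}$ (nodes with no parents). A collider on a path is a node $u$ with both incident path edges pointing into $u$; a trek is a path (no repeated vertices) with no collider. The unconditional dependence graph $\mathcal{U}^\mathcal{D}$ of $\mathcal{D}$ is the undirected graph on $V$ in which distinct $v,w$ are adjacent iff there is a trek between $v$ and $w$ in $\mathcal{D}$ (i.e. $v,w$ are d-connected given $\emptyset$). Operators: $r(\mathcal{D})$ reverses every edge of $\mathcal{D}$; $t(\mathcal{D})$ is the transitive closure (add $v\to w$ whenever there is a directed path from $v$ to $w$); $m(\mathcal{D})$ (moralization) adds an edge between every pair of nonadjacent nodes having a common child and then makes all edges undirected. For a symmetric matrix $M$, $a(M)$ is the $0/1$ matrix with $a(M)_{v,w}=1$ iff $v\neq w$ and $M_{v,w}\neq 0$. *)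

theory Defs
  imports Complex_Main
begin

text \<open>A DAG on the vertex set V = {0..<n} is given by its edge relation
  E :: (nat \<times> nat) set with E \<subseteq> V \<times> V and acyclic E.
  Undirected graphs on V are represented by their edge sets, i.e. sets of
  two-element subsets of V.\<close>

definition adjacent :: "(nat \<times> nat) set \<Rightarrow> nat \<Rightarrow> nat \<Rightarrow> bool" where
  "adjacent E u v \<longleftrightarrow> (u, v) \<in> E \<or> (v, u) \<in> E"

definition is_path :: "(nat \<times> nat) set \<Rightarrow> nat list \<Rightarrow> bool" where
  "is_path E xs \<longleftrightarrow> xs \<noteq> [] \<and> distinct xs \<and>
     (\<forall>i. Suc i < length xs \<longrightarrow> adjacent E (xs ! i) (xs ! Suc i))"

definition is_collider :: "(nat \<times> nat) set \<Rightarrow> nat list \<Rightarrow> nat \<Rightarrow> bool" where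
  "is_collider E xs i \<longleftrightarrow> 0 < i \<and> Suc i < length xs \<and>
     (xs ! (i - 1), xs ! i) \<in> E \<and> (xs ! Suc i, xs ! i) \<in> E"

definition is_trek :: "(nat \<times> nat) set \<Rightarrow> nat list \<Rightarrow> bool" where
  "is_trek E xs \<longleftrightarrow> is_path E xs \<and> (\<forall>i. \<not> is_collider E xs i)"

definition trek_between :: "(nat \<times> nat) set \<Rightarrow> nat \<Rightarrow> nat \<Rightarrow> bool" where
  "trek_between E v w \<longleftrightarrow> (\<exists>xs. is_trek E xs \<and> hd xs = v \<and> last xs = w)"

definition an :: "(nat \<times> nat) set \<Rightarrow> nat \<Rightarrow> nat set" where
  "an E v = {u. (u, v) \<in> E\<^sup>*}"

definition de :: "(nat \<times> nat) set \<Rightarrow> nat \<Rightarrow> nat set" where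
  "de E v = {u. (v, u) \<in> E\<^sup>*}"

definition ma :: "(nat \<times> nat) set \<Rightarrow> nat set \<Rightarrow> nat set" where
  "ma E V = {v \<in> V. \<not> (\<exists>u. (u, v) \<in> E)}"

definition udg :: "nat \<Rightarrow> (nat \<times> nat) set \<Rightarrow> nat set set" where
  "udg n E = {{v, w} | v w. v < n \<and> w < n \<and> v \<noteq> w \<and> trek_between E v w}"

definition U1 :: "nat \<Rightarrow> (nat \<times> nat) set \<Rightarrow> nat set set" where
  "U1 n E = {{v, w} | v w. v < n \<and> w < n \<and> v \<noteq> w \<and> an E v \<inter> an E w \<noteq> {}}"

definition U2 :: "nat \<Rightarrow> (nat \<times> nat) set \<Rightarrow> nat set set" where
  "U2 n E = (\<Union>m \<in> ma E {0..<n}. {{v, w} | v w. v \<in> de E m \<and> w \<in> de E m \<and> v \<noteq> w})"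

definition rev_graph :: "(nat \<times> nat) set \<Rightarrow> (nat \<times> nat) set" where
  "rev_graph E = E\<inverse>"

definition tc_graph :: "(nat \<times> nat) set \<Rightarrow> (nat \<times> nat) set" where
  "tc_graph E = E\<^sup>+"

definition moral :: "(nat \<times> nat) set \<Rightarrow> nat set set" where
  "moral E = {{v, w} | v w. adjacent E v w \<or>
       (v \<noteq> w \<and> \<not> adjacent E v w \<and> (\<exists>c. (v, c) \<in> E \<and> (w, c) \<in> E))}"

definition U3 :: "(nat \<times> nat) set \<Rightarrow> nat set set" where
  "U3 E = moral (tc_graph (rev_graph E))"

text \<open>Matrices as functions nat \<Rightarrow> nat \<Rightarrow> real, indexed by {0..<n}.\<close>
definition adj_matrix :: "(nat \<times> nat) set \<Rightarrow> nat \<Rightarrow> nat \<Rightarrow> real" where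
  "adj_matrix E v w = (if (v, w) \<in> E then 1 else 0)"

definition mmult :: "nat \<Rightarrow> (nat \<Rightarrow> nat \<Rightarrow> real) \<Rightarrow> (nat \<Rightarrow> nat \<Rightarrow> real) \<Rightarrow> nat \<Rightarrow> nat \<Rightarrow> real" where
  "mmult n A B i j = (\<Sum>k<n. A i k * B k j)"

definition mtranspose :: "(nat \<Rightarrow> nat \<Rightarrow> real) \<Rightarrow> nat \<Rightarrow> nat \<Rightarrow> real" where
  "mtranspose A i j = A j i"

fun mpow :: "nat \<Rightarrow> (nat \<Rightarrow> nat \<Rightarrow> real) \<Rightarrow> nat \<Rightarrow> nat \<Rightarrow> nat \<Rightarrow> real" where
  "mpow n A 0 = (\<lambda>i j. if i = j then 1 else 0)"
| "mpow n A (Suc p) = mmult n (mpow n A p) A"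

definition Tmat :: "nat \<Rightarrow> (nat \<times> nat) set \<Rightarrow> nat \<Rightarrow> nat \<Rightarrow> real" where
  "Tmat n E i j = (\<Sum>p<n. mpow n (adj_matrix E) p i j)"

definition amat :: "(nat \<Rightarrow> nat \<Rightarrow> real) \<Rightarrow> nat \<Rightarrow> nat \<Rightarrow> real" where
  "amat M v w = (if v \<noteq> w \<and> M v w \<noteq> 0 then 1 else 0)"

definition graph_of_matrix :: "nat \<Rightarrow> (nat \<Rightarrow> nat \<Rightarrow> real) \<Rightarrow> nat set set" where
  "graph_of_matrix n M = {{v, w} | v w. v < n \<and> w < n \<and> M v w = 1}"

definition U4 :: "nat \<Rightarrow> (nat \<times> nat) set \<Rightarrow> nat set set" where
  "U4 n E = graph_of_matrix n
     (amat (mmult n (mtranspose (Tmat n E)) (Tmat n E)))"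

end

theory Submission
  imports Defs
begin

text \<open>All four graphs join exactly the distinct nodes with a common ancestor. Along a walk
  without colliders the edges first point back towards the start and then forward towards the
  end, so the turning node is a common ancestor of the endpoints; conversely, two directed paths
  from a common ancestor of minimal total length meet only at their start, and walking the first
  one backwards and the second one forwards is a trek. Every common ancestor descends from a
  source, which gives \<open>U\<^sub>2\<close>. In \<open>t(r(D))\<close> the edges join comparable nodes and
  moralization adds the pairs with a common proper ancestor, which gives \<open>U\<^sub>3\<close>. Finally the
  entries of \<open>A\<^sup>p\<close> are nonnegative and detect directed paths of length \<open>p\<close>, which in an
  acyclic graph on \<open>n\<close> nodes have length below \<open>n\<close>; so \<open>T\<^sub>u\<^sub>v \<noteq> 0\<close> iff \<open>u\<close> is an ancestor
  of \<open>v\<close>, and \<open>(T\<^sup>T T)\<^sub>v\<^sub>w \<noteq> 0\<close> iff \<open>v\<close>, \<open>w\<close> have a common ancestor, giving \<open>U\<^sub>4\<close>.\<close>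

lemma chain_trancl:
  assumes "\<forall>k<n. (f k, f (Suc k)) \<in> r" "i < j" "j \<le> n"
  shows "(f i, f j) \<in> r\<^sup>+"
  using assms(2,3)
proof (induction j)
  case (Suc j)
  have "(f j, f (Suc j)) \<in> r" using assms(1) Suc.prems by simp
  then show ?case using Suc by (cases "i = j") (auto intro: trancl_into_trancl)
qed simp

lemma acyclic_chain_inj:
  assumes "acyclic r" "\<forall>k<n. (f k, f (Suc k)) \<in> r"
  shows "inj_on f {0..n}"
proof (rule inj_onI, rule ccontr)
  fix i j assume "i \<in> {0..n}" "j \<in> {0..n}" "f i = f j" "i \<noteq> j"
  then show False
    using chain_trancl[OF assms(2), of i j] chain_trancl[OF assms(2), of j i] assms(1)
    unfolding acyclic_def by (auto simp: linorder_neq_iff)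
qed

lemma rtrancl_closed:
  assumes "r \<subseteq> A \<times> A" "(a, b) \<in> r\<^sup>*"
  shows "a \<in> A \<longleftrightarrow> b \<in> A"
  using assms(2) by induction (use assms(1) in auto)

lemma acyclic_not_sym: "acyclic r \<Longrightarrow> (x, y) \<in> r \<Longrightarrow> (y, x) \<notin> r"
  unfolding acyclic_def by (meson r_into_trancl trancl_into_trancl)

lemma acyclic_relpow_less_card:
  assumes "r \<subseteq> A \<times> A" "finite A" "acyclic r" "a \<in> A" "(a, b) \<in> r ^^ p"
  shows "p < card A"
proof -
  obtain f where f: "f 0 = a" "\<forall>k<p. (f k, f (Suc k)) \<in> r"
    using assms(5) relpow_fun_conv by metis
  have "f k \<in> A" if "k \<le> p" for k
  proof (cases k)
    case (Suc k')
    then have "(f k', f k) \<in> r" using f(2) that by simp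
    then show ?thesis using assms(1) by auto
  qed (use f(1) assms(4) in simp)
  then have "f ` {0..p} \<subseteq> A" by auto
  then have "card (f ` {0..p}) \<le> card A" using assms(2) by (rule card_mono[rotated])
  moreover have "card (f ` {0..p}) = Suc p"
    using card_image[OF acyclic_chain_inj[OF assms(3) f(2)]] by simp
  ultimately show ?thesis by simp
qed

lemma acyclic_rtrancl_iff_short_relpow:
  assumes "r \<subseteq> A \<times> A" "finite A" "acyclic r" "a \<in> A"
  shows "(a, b) \<in> r\<^sup>* \<longleftrightarrow> (\<exists>p<card A. (a, b) \<in> r ^^ p)"
  using acyclic_relpow_less_card[OF assms] rtrancl_power by blast

lemma finite_acyclic_obtains_source_ancestor:
  assumes "finite r" "acyclic r"
  obtains m where "(m, c) \<in> r\<^sup>*" "\<nexists>u. (u, m) \<in> r"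
proof -
  obtain m where m: "m \<in> {m. (m, c) \<in> r\<^sup>*}"
    and minimal: "\<And>u. (u, m) \<in> r \<Longrightarrow> u \<notin> {m. (m, c) \<in> r\<^sup>*}"
    using wfE_min[OF finite_acyclic_wf[OF assms], of c "{m. (m, c) \<in> r\<^sup>*}"] by blast
  have "\<nexists>u. (u, m) \<in> r"
    using m minimal by (blast intro: converse_rtrancl_into_rtrancl)
  with m that show ?thesis by blast
qed

definition common_ancestor :: "(nat \<times> nat) set \<Rightarrow> nat \<Rightarrow> nat \<Rightarrow> bool" where
  "common_ancestor E v w \<longleftrightarrow> (\<exists>c. (c, v) \<in> E\<^sup>* \<and> (c, w) \<in> E\<^sup>*)"

lemma walk_without_collider_common_ancestor:
  "xs \<noteq> [] \<Longrightarrow> (\<forall>i. Suc i < length xs \<longrightarrow> adjacent E (xs ! i) (xs ! Suc i)) \<Longrightarrow>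
   (\<forall>i. \<not> is_collider E xs i) \<Longrightarrow>
   \<exists>c. (c, hd xs) \<in> E\<^sup>* \<and> (c, last xs) \<in> E\<^sup>* \<and>
     (c = hd xs \<or> Suc 0 < length xs \<and> (xs ! Suc 0, xs ! 0) \<in> E)"
  \<comment> \<open>Unless the ancestor is the first node, the first edge points back to the start;
    this is what excludes a collider when the walk is extended at the front.\<close>
proof (induction xs)
  case (Cons x xs)
  show ?case
  proof (cases xs)
    case (Cons y ys)
    have adjacent: "\<forall>i. Suc i < length xs \<longrightarrow> adjacent E (xs ! i) (xs ! Suc i)"
      using Cons.prems(2) by (metis Suc_less_eq length_Cons nth_Cons_Suc)
    have no_collider: "\<forall>i. \<not> is_collider E xs i"
    proof
      fix i show "\<not> is_collider E xs i"
        using Cons.prems(3)[rule_format, of "Suc i"] by (cases i) (auto simp: is_collider_def)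
    qed
    obtain c where c: "(c, y) \<in> E\<^sup>*" "(c, last xs) \<in> E\<^sup>*"
        "c = y \<or> Suc 0 < length xs \<and> (xs ! Suc 0, y) \<in> E"
      using Cons.IH[OF _ adjacent no_collider] \<open>xs = y # ys\<close> by auto
    show ?thesis
    proof (cases "(y, x) \<in> E")
      case True
      then show ?thesis using c \<open>xs = y # ys\<close> by (auto intro: rtrancl_into_rtrancl)
    next
      case False
      then have "(x, y) \<in> E" using Cons.prems(2)[rule_format, of 0] \<open>xs = y # ys\<close>
        by (simp add: adjacent_def)
      moreover have "c = y"
      proof (rule ccontr)
        assume "c \<noteq> y"
        with c \<open>(x, y) \<in> E\<close> have "is_collider E (x # xs) (Suc 0)"
          using \<open>xs = y # ys\<close> by (auto simp: is_collider_def)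
        then show False using Cons.prems(3) by blast
      qed
      ultimately show ?thesis
        using c(2) \<open>xs = y # ys\<close> by (auto intro: converse_rtrancl_into_rtrancl)
    qed
  qed simp
qed simp

lemma trek_between_imp_common_ancestor:
  "trek_between E v w \<Longrightarrow> common_ancestor E v w"
  unfolding trek_between_def is_trek_def is_path_def common_ancestor_def
  using walk_without_collider_common_ancestor by blast

lemma peak_walk_is_trek:
  assumes "acyclic E" "a \<le> N" "inj_on h {0..N}"
    and backward: "\<And>k. k < a \<Longrightarrow> (h (Suc k), h k) \<in> E"
    and forward: "\<And>k. a \<le> k \<Longrightarrow> k < N \<Longrightarrow> (h k, h (Suc k)) \<in> E"
  shows "is_trek E (map h [0..<Suc N])"
  unfolding is_trek_def is_path_def
proof (intro conjI allI impI)
  let ?xs = "map h [0..<Suc N]"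
  have nth: "?xs ! k = h k" if "k \<le> N" for k
    using that by (simp del: upt_Suc)
  show "distinct ?xs"
    using assms(3) by (simp add: distinct_map atLeastLessThanSuc_atLeastAtMost del: upt_Suc)
  show "?xs \<noteq> []" by simp
  fix i
  show "adjacent E (?xs ! i) (?xs ! Suc i)" if "Suc i < length ?xs"
    using that backward[of i] forward[of i]
    by (cases "i < a") (auto simp: nth adjacent_def simp del: upt_Suc)
  show "\<not> is_collider E ?xs i"
  proof
    assume "is_collider E ?xs i"
    then have "0 < i" "i < N" "(h (i - 1), h i) \<in> E" "(h (Suc i), h i) \<in> E"
      by (auto simp: is_collider_def nth simp del: upt_Suc)
    moreover obtain j where "i = Suc j" using \<open>0 < i\<close> gr0_conv_Suc by blast
    ultimately show False
      using backward[of j] forward[of i] acyclic_not_sym[OF assms(1)]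
      by (cases "i \<le> a") auto
  qed
qed

lemma common_ancestor_obtains_disjoint_chains:
  assumes "common_ancestor E v w"
  obtains f g a b where "f 0 = g 0" "f a = v" "g b = w"
    "\<forall>k<a. (f k, f (Suc k)) \<in> E" "\<forall>k<b. (g k, g (Suc k)) \<in> E"
    "\<And>i j. i \<le> a \<Longrightarrow> j \<le> b \<Longrightarrow> f i = g j \<Longrightarrow> i = 0 \<and> j = 0"
proof -
  define P where "P N \<longleftrightarrow> (\<exists>a b f g. a + b = N \<and> f 0 = g 0 \<and> f a = v \<and> g b = w \<and>
    (\<forall>k<a. (f k, f (Suc k)) \<in> E) \<and> (\<forall>k<b. (g k, g (Suc k)) \<in> E))" for N
  obtain c a0 b0 where "(c, v) \<in> E ^^ a0" "(c, w) \<in> E ^^ b0"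
    using assms unfolding common_ancestor_def rtrancl_power by blast
  then have "P (a0 + b0)" unfolding P_def relpow_fun_conv by metis
  then have "P (LEAST N. P N)" by (rule LeastI)
  then obtain a b f g where ab: "a + b = (LEAST N. P N)"
    and chains: "f 0 = g 0" "f a = v" "g b = w"
    "\<forall>k<a. (f k, f (Suc k)) \<in> E" "\<forall>k<b. (g k, g (Suc k)) \<in> E"
    unfolding P_def by blast
  have disjoint: "i = 0 \<and> j = 0" if "i \<le> a" "j \<le> b" "f i = g j" for i j
  proof -
    \<comment> \<open>The chains have minimal total length, and a meeting point \<open>f i = g j\<close> starts
      chains of total length \<open>(a - i) + (b - j)\<close>.\<close>
    have "P ((a - i) + (b - j))" unfolding P_def
      by (rule exI[of _ "a - i"], rule exI[of _ "b - j"],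
          rule exI[of _ "\<lambda>k. f (k + i)"], rule exI[of _ "\<lambda>k. g (k + j)"])
        (use that chains in auto)
    then have "a + b \<le> (a - i) + (b - j)" unfolding ab by (rule Least_le)
    then show ?thesis using that by linarith
  qed
  from chains disjoint show ?thesis by (rule that)
qed

lemma common_ancestor_imp_trek_between:
  assumes "acyclic E" "common_ancestor E v w"
  shows "trek_between E v w"
proof (rule common_ancestor_obtains_disjoint_chains[OF assms(2)])
  fix f g a b
  assume chains: "f 0 = g 0" "f a = v" "g b = w"
    and f: "\<forall>k<a. (f k, f (Suc k)) \<in> E" and g: "\<forall>k<b. (g k, g (Suc k)) \<in> E"
    and disjoint: "\<And>i j. i \<le> a \<Longrightarrow> j \<le> b \<Longrightarrow> f i = g j \<Longrightarrow> i = 0 \<and> j = 0"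
  define h where "h k = (if k \<le> a then f (a - k) else g (k - a))" for k
  have h_g: "h k = g (k - a)" if "a \<le> k" for k
    using that chains(1) unfolding h_def by auto
  have inj_h: "inj_on h {0..a + b}"
  proof (rule inj_onI)
    fix k l assume kl: "k \<in> {0..a + b}" "l \<in> {0..a + b}" "h k = h l"
    have inj_f: "inj_on f {0..a}" and inj_g: "inj_on g {0..b}"
      using acyclic_chain_inj[OF assms(1)] f g by blast+
    consider "k \<le> a" "l \<le> a" | "a < k" "a < l" | "k \<le> a" "a < l" | "a < k" "l \<le> a"
      by linarith
    then show "k = l"
    proof cases
      case 1
      then have "a - k = a - l" using kl inj_f unfolding h_def by (auto dest: inj_onD)
      then show ?thesis using 1 by linarith
    next
      case 2
      then have "k - a = l - a" using kl inj_g unfolding h_def by (auto dest: inj_onD)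
      then show ?thesis using 2 by linarith
    next
      case 3
      then have "f (a - k) = g (l - a)" using kl unfolding h_def by simp
      then show ?thesis using 3 kl disjoint[of "a - k" "l - a"] by (auto simp: le_diff_conv)
    next
      case 4
      then have "f (a - l) = g (k - a)" using kl unfolding h_def by simp
      then show ?thesis using 4 kl disjoint[of "a - l" "k - a"] by (auto simp: le_diff_conv)
    qed
  qed
  have backward: "(h (Suc k), h k) \<in> E" if "k < a" for k
    using f[rule_format, of "a - Suc k"] that by (simp add: h_def Suc_diff_Suc)
  have forward: "(h k, h (Suc k)) \<in> E" if "a \<le> k" "k < a + b" for k
    using g[rule_format, of "k - a"] that h_g[of k] h_g[of "Suc k"] by (simp add: Suc_diff_le)
  have "is_trek E (map h [0..<Suc (a + b)])"
    using peak_walk_is_trek[OF assms(1) le_add1 inj_h backward forward] .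
  moreover have "hd (map h [0..<Suc (a + b)]) = v"
    using chains(2) by (simp add: h_def hd_map del: upt_Suc)
  moreover have "last (map h [0..<Suc (a + b)]) = w"
    using chains(3) h_g[of "a + b"] by (simp add: last_map del: upt_Suc)
  ultimately show ?thesis unfolding trek_between_def by blast
qed

lemma trek_between_iff_common_ancestor:
  "acyclic E \<Longrightarrow> trek_between E v w \<longleftrightarrow> common_ancestor E v w"
  using trek_between_imp_common_ancestor common_ancestor_imp_trek_between by blast

lemma mpow_adj_matrix_nonneg: "0 \<le> mpow n (adj_matrix E) p i j"
  by (induction p arbitrary: j) (auto simp: mmult_def adj_matrix_def intro!: sum_nonneg)

lemma mpow_adj_matrix_neq_0_iff:
  assumes "E \<subseteq> {0..<n} \<times> {0..<n}"
  shows "mpow n (adj_matrix E) p i j \<noteq> 0 \<longleftrightarrow> (i, j) \<in> E ^^ p"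
proof (induction p arbitrary: j)
  case (Suc p)
  have "mpow n (adj_matrix E) (Suc p) i j \<noteq> 0 \<longleftrightarrow>
      (\<exists>k<n. mpow n (adj_matrix E) p i k \<noteq> 0 \<and> adj_matrix E k j \<noteq> 0)"
    by (auto simp: mmult_def sum_nonneg_eq_0_iff adj_matrix_def mpow_adj_matrix_nonneg)
  also have "\<dots> \<longleftrightarrow> (\<exists>k<n. (i, k) \<in> E ^^ p \<and> (k, j) \<in> E)"
    by (auto simp: Suc.IH adj_matrix_def)
  also have "\<dots> \<longleftrightarrow> (i, j) \<in> E ^^ Suc p"
    using assms by (auto 4 3)
  finally show ?case .
qed simp

lemma Tmat_neq_0_iff:
  assumes "E \<subseteq> {0..<n} \<times> {0..<n}" "acyclic E" "i < n"
  shows "Tmat n E i j \<noteq> 0 \<longleftrightarrow> (i, j) \<in> E\<^sup>*"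
proof -
  have "Tmat n E i j \<noteq> 0 \<longleftrightarrow> (\<exists>p<n. (i, j) \<in> E ^^ p)"
    by (auto simp: Tmat_def sum_nonneg_eq_0_iff mpow_adj_matrix_nonneg
        mpow_adj_matrix_neq_0_iff[OF assms(1), symmetric])
  also have "\<dots> \<longleftrightarrow> (i, j) \<in> E\<^sup>*"
    using acyclic_rtrancl_iff_short_relpow[OF assms(1) _ assms(2), of i j] assms(3) by simp
  finally show ?thesis .
qed

lemma Tmat_gram_neq_0_iff:
  assumes "E \<subseteq> {0..<n} \<times> {0..<n}" "acyclic E" "v < n"
  shows "mmult n (mtranspose (Tmat n E)) (Tmat n E) v w \<noteq> 0 \<longleftrightarrow> common_ancestor E v w"
proof -
  have Tmat_nonneg: "0 \<le> Tmat n E i j" for i j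
    unfolding Tmat_def by (intro sum_nonneg mpow_adj_matrix_nonneg)
  have "mmult n (mtranspose (Tmat n E)) (Tmat n E) v w \<noteq> 0 \<longleftrightarrow>
      (\<exists>k<n. Tmat n E k v \<noteq> 0 \<and> Tmat n E k w \<noteq> 0)"
    by (auto simp: mmult_def mtranspose_def sum_nonneg_eq_0_iff Tmat_nonneg)
  also have "\<dots> \<longleftrightarrow> (\<exists>k<n. (k, v) \<in> E\<^sup>* \<and> (k, w) \<in> E\<^sup>*)"
    using Tmat_neq_0_iff[OF assms(1,2)] by auto
  also have "\<dots> \<longleftrightarrow> common_ancestor E v w"
    using rtrancl_closed[OF assms(1)] assms(3) unfolding common_ancestor_def by auto
  finally show ?thesis .
qed

definition common_ancestor_graph :: "nat \<Rightarrow> (nat \<times> nat) set \<Rightarrow> nat set set" where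
  "common_ancestor_graph n E =
     {{v, w} | v w. v < n \<and> w < n \<and> v \<noteq> w \<and> common_ancestor E v w}"

lemma udg_eq_common_ancestor_graph: "acyclic E \<Longrightarrow> udg n E = common_ancestor_graph n E"
  by (simp add: udg_def common_ancestor_graph_def trek_between_iff_common_ancestor)

lemma U1_eq_common_ancestor_graph: "U1 n E = common_ancestor_graph n E"
  by (simp add: U1_def common_ancestor_graph_def common_ancestor_def an_def disjoint_iff)

lemma U2_eq_common_ancestor_graph:
  assumes "E \<subseteq> {0..<n} \<times> {0..<n}" "acyclic E"
  shows "U2 n E = common_ancestor_graph n E"
proof -
  have closed: "(a, b) \<in> E\<^sup>* \<Longrightarrow> a < n \<longleftrightarrow> b < n" for a b
    using rtrancl_closed[OF assms(1)] by simp
  have "finite E" using assms(1) by (rule finite_subset) simp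
  have source: "(\<exists>m\<in>ma E {0..<n}. v \<in> de E m \<and> w \<in> de E m \<and> v \<noteq> w) \<longleftrightarrow>
      v < n \<and> w < n \<and> v \<noteq> w \<and> common_ancestor E v w" for v w
  proof
    assume "\<exists>m\<in>ma E {0..<n}. v \<in> de E m \<and> w \<in> de E m \<and> v \<noteq> w"
    then obtain m where "m < n" "(m, v) \<in> E\<^sup>*" "(m, w) \<in> E\<^sup>*" "v \<noteq> w"
      unfolding ma_def de_def by auto
    then show "v < n \<and> w < n \<and> v \<noteq> w \<and> common_ancestor E v w"
      using closed unfolding common_ancestor_def by blast
  next
    assume "v < n \<and> w < n \<and> v \<noteq> w \<and> common_ancestor E v w"
    then obtain c where c: "c < n" "(c, v) \<in> E\<^sup>*" "(c, w) \<in> E\<^sup>*" "v \<noteq> w"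
      unfolding common_ancestor_def using closed by blast
    obtain m where m: "(m, c) \<in> E\<^sup>*" "\<nexists>u. (u, m) \<in> E"
      using finite_acyclic_obtains_source_ancestor[OF \<open>finite E\<close> assms(2)] .
    have "m < n" using closed[OF m(1)] c(1) by simp
    with m c show "\<exists>m\<in>ma E {0..<n}. v \<in> de E m \<and> w \<in> de E m \<and> v \<noteq> w"
      unfolding ma_def de_def by (auto intro: rtrancl_trans)
  qed
  show ?thesis
    unfolding U2_def common_ancestor_graph_def source[symmetric] by auto
qed

lemma common_ancestor_iff_trancl:
  "v \<noteq> w \<Longrightarrow> common_ancestor E v w \<longleftrightarrow>
     (v, w) \<in> E\<^sup>+ \<or> (w, v) \<in> E\<^sup>+ \<or> (\<exists>c. (c, v) \<in> E\<^sup>+ \<and> (c, w) \<in> E\<^sup>+)"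
  unfolding common_ancestor_def by (metis rtrancl_eq_or_trancl trancl_into_rtrancl)

lemma U3_eq_common_ancestor_graph:
  assumes "E \<subseteq> {0..<n} \<times> {0..<n}" "acyclic E"
  shows "U3 E = common_ancestor_graph n E"
proof -
  have reversed: "(x, y) \<in> tc_graph (rev_graph E) \<longleftrightarrow> (y, x) \<in> E\<^sup>+" for x y
    by (simp add: tc_graph_def rev_graph_def trancl_converse)
  have in_V: "x < n \<and> y < n" if "(x, y) \<in> E\<^sup>+" for x y
    using trancl_subset_Sigma[OF assms(1)] that by auto
  have irrefl: "(x, x) \<notin> E\<^sup>+" for x
    using assms(2) by (simp add: acyclic_def)
  have moral_edge: "(adjacent (tc_graph (rev_graph E)) v w \<or>
      (v \<noteq> w \<and> \<not> adjacent (tc_graph (rev_graph E)) v w \<and>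
       (\<exists>c. (v, c) \<in> tc_graph (rev_graph E) \<and> (w, c) \<in> tc_graph (rev_graph E))))
    \<longleftrightarrow> v < n \<and> w < n \<and> v \<noteq> w \<and> common_ancestor E v w" for v w
    by (cases "v = w")
      (auto simp: adjacent_def reversed irrefl common_ancestor_iff_trancl dest: in_V)
  show ?thesis
    unfolding U3_def moral_def common_ancestor_graph_def moral_edge ..
qed

lemma U4_eq_common_ancestor_graph:
  assumes "E \<subseteq> {0..<n} \<times> {0..<n}" "acyclic E"
  shows "U4 n E = common_ancestor_graph n E"
proof -
  have gram_edge: "v < n \<and> w < n \<and> amat (mmult n (mtranspose (Tmat n E)) (Tmat n E)) v w = 1
      \<longleftrightarrow> v < n \<and> w < n \<and> v \<noteq> w \<and> common_ancestor E v w" for v w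
    using Tmat_gram_neq_0_iff[OF assms, of v w] by (auto simp: amat_def)
  show ?thesis
    unfolding U4_def graph_of_matrix_def common_ancestor_graph_def gram_edge ..
qed

theorem theorem2p2:
  fixes n :: nat and E :: "(nat \<times> nat) set"
  assumes "E \<subseteq> {0..<n} \<times> {0..<n}"
    and "acyclic E"
  shows "udg n E = U1 n E \<and> udg n E = U2 n E \<and> udg n E = U3 E \<and> udg n E = U4 n E"
  using udg_eq_common_ancestor_graph[OF assms(2)] U1_eq_common_ancestor_graph
    U2_eq_common_ancestor_graph[OF assms] U3_eq_common_ancestor_graph[OF assms]
    U4_eq_common_ancestor_graph[OF assms]
  by simp

end
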